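(* Let $(X,\beta)$ be a prechart. For all $x,y\in X$ and all $k\in\mathbb{N}$, $x\sim^{(k)}y$ if and only if $\mathsf{bd}_\beta(x,y)\le 2^{-k}$.
   Context: Fix a set $V=\{v_1,v_2,\dots\}$ of variables and a set $\Sigma$ of letters. A prechart is a pair $(X,\beta)$ with $\beta:X\to P_{\mathrm{fin}}(\Sigma\times X+V)$; write $x\xrightarrow{a}x'$ iff $(a,x')\in\beta(x)$, $x\rhd v$ iff $v\in\beta(x)$, and $E(x)=\beta(x)\cap V$. Stratified bisimilarity: $x\sim^{(0)}y$ always; $x\sim^{(n+1)}y$ iff $E(x)=E(y)$, every $x\xrightarrow{a}x'$ is matched by some $y\xrightarrow{a}y'$ with $x'\sim^{(n)}y'$, and symmetrically. A 1-bounded pseudometric on $X$ is $d:X\times X\to[0,1]$ with $d(x,x)=0$, symmetry and triangle inequality; $D_X$ is the set of these, ordered pointwise. For $d\in D_X$, $d^\uparrow$ on $\Sigma\times X+V$ is $d^\uparrow((a,x),(a,y))=\tfrac12 d(x,y)$, $d^\uparrow(m,n)=0$ if $m=n$, $1$ otherwise. $\mathcal H(d)(A,B)=\max\{\sup_{x\in A}\inf_{y\in B}d(x,y),\sup_{y\in B}\inf_{x\in A}d(y,x)\}$ with $\sup\emptyset=0$, $\inf\emptyset=1$. $\Phi_\beta(d)(x,y)=\mathcal H(d^\uparrow)(\beta(x),\beta(y))$, a monotone map on $D_X$; $\mathsf{bd}_\beta$ is its least fixpoint (so $\mathsf{bd}_\beta=\Phi_\beta(\mathsf{bd}_\beta)$).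 *)

theory Defs
  imports Main "HOL.Real"
begin

text \<open>A prechart with state set the type 'x, letters 'a, variables 'v:
  beta :: 'x => ('a * 'x + 'v) set, with finitely many outcomes per state.\<close>

definition prechart :: "('x \<Rightarrow> ('a \<times> 'x + 'v) set) \<Rightarrow> bool" where
  "prechart \<beta> \<longleftrightarrow> (\<forall>x. finite (\<beta> x))"

definition Eout :: "('x \<Rightarrow> ('a \<times> 'x + 'v) set) \<Rightarrow> 'x \<Rightarrow> 'v set" where
  "Eout \<beta> x = {v. Inr v \<in> \<beta> x}"

fun strat_bisim :: "('x \<Rightarrow> ('a \<times> 'x + 'v) set) \<Rightarrow> nat \<Rightarrow> 'x \<Rightarrow> 'x \<Rightarrow> bool" where
  "strat_bisim \<beta> 0 x y = True"
| "strat_bisim \<beta> (Suc n) x y \<longleftrightarrow>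
     Eout \<beta> x = Eout \<beta> y
   \<and> (\<forall>a x'. Inl (a, x') \<in> \<beta> x \<longrightarrow> (\<exists>y'. Inl (a, y') \<in> \<beta> y \<and> strat_bisim \<beta> n x' y'))
   \<and> (\<forall>a y'. Inl (a, y') \<in> \<beta> y \<longrightarrow> (\<exists>x'. Inl (a, x') \<in> \<beta> x \<and> strat_bisim \<beta> n x' y'))"

definition pseudometrics :: "('x \<Rightarrow> 'x \<Rightarrow> real) set" where
  "pseudometrics = {d. (\<forall>x y. 0 \<le> d x y \<and> d x y \<le> 1) \<and> (\<forall>x. d x x = 0)
      \<and> (\<forall>x y. d x y = d y x) \<and> (\<forall>x y z. d x z \<le> d x y + d y z)}"

fun lift_dist :: "('x \<Rightarrow> 'x \<Rightarrow> real) \<Rightarrow> ('a \<times> 'x + 'v) \<Rightarrow> ('a \<times> 'x + 'v) \<Rightarrow> real" where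
  "lift_dist d (Inl (a, x)) (Inl (b, y)) = (if a = b then d x y / 2 else 1)"
| "lift_dist d m n = (if m = n then 0 else 1)"

definition sup0 :: "real set \<Rightarrow> real" where
  "sup0 S = (if S = {} then 0 else Sup S)"

definition inf1 :: "real set \<Rightarrow> real" where
  "inf1 S = (if S = {} then 1 else Inf S)"

definition hausdorff :: "('b \<Rightarrow> 'b \<Rightarrow> real) \<Rightarrow> 'b set \<Rightarrow> 'b set \<Rightarrow> real" where
  "hausdorff d A B = max (sup0 ((\<lambda>x. inf1 ((\<lambda>y. d x y) ` B)) ` A))
                         (sup0 ((\<lambda>y. inf1 ((\<lambda>x. d y x) ` A)) ` B))"

definition Phi :: "('x \<Rightarrow> ('a \<times> 'x + 'v) set) \<Rightarrow> ('x \<Rightarrow> 'x \<Rightarrow> real) \<Rightarrow> ('x \<Rightarrow> 'x \<Rightarrow> real)" where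
  "Phi \<beta> d = (\<lambda>x y. hausdorff (lift_dist d) (\<beta> x) (\<beta> y))"

definition bd :: "('x \<Rightarrow> ('a \<times> 'x + 'v) set) \<Rightarrow> 'x \<Rightarrow> 'x \<Rightarrow> real" where
  "bd \<beta> = (THE d. d \<in> pseudometrics \<and> Phi \<beta> d = d
              \<and> (\<forall>d' \<in> pseudometrics. Phi \<beta> d' = d' \<longrightarrow> d \<le> d'))"

end

theory Submission
  imports Defs
begin

text \<open>
  Level k+1 of stratified bisimilarity is the Egli-Milner lifting \<^const>\<open>rel_set\<close> of level k,
  transported to \<open>\<Sigma> \<times> X + V\<close> by \<open>lift_rel\<close>.  For finite sets, the Hausdorff distance
  is at most c if the sets are Egli-Milner related by a symmetric relation on which all
  distances are at most c, and at least c (for c \<le> 1) if they are not Egli-Milner related by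
  a symmetric relation outside of which all distances are at least c.  Since \<open>lift_dist\<close>
  halves distances, \<open>\<Phi>\<close> therefore propagates the correspondence
  ``\<open>strat_bisim \<beta> k x y\<close> iff \<open>d x y \<le> (1/2)^k\<close>'' from level k to level k+1.  So the
  explicit distance \<open>(1/2)^m\<close>, where m is the largest level at which x and y are still
  bisimilar (0 if there is none), is a fixpoint of \<open>\<Phi>\<close>, and induction on k shows that every
  fixpoint lies above it; hence it is \<open>bd \<beta>\<close>.
\<close>

fun lift_rel :: "('x \<Rightarrow> 'x \<Rightarrow> bool) \<Rightarrow> ('a \<times> 'x + 'v) \<Rightarrow> ('a \<times> 'x + 'v) \<Rightarrow> bool" where
  "lift_rel r (Inl (a, x)) (Inl (b, y)) \<longleftrightarrow> a = b \<and> r x y"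
| "lift_rel r m n \<longleftrightarrow> m = n"

lemma lift_rel_mono: "r \<le> s \<Longrightarrow> lift_rel r \<le> lift_rel s"
  by (intro predicate2I) (erule lift_rel.elims; auto)

lemma lift_rel_conversep: "lift_rel r\<inverse>\<inverse> = (lift_rel r)\<inverse>\<inverse>"
  by (intro ext iffI) (auto elim!: lift_rel.elims)

lemma lift_rel_OO: "lift_rel r OO lift_rel s \<le> lift_rel (r OO s)"
  by (intro predicate2I) (auto elim!: lift_rel.elims)

lemma lift_rel_Inl_iff: "lift_rel r (Inl (a, x)) q \<longleftrightarrow> (\<exists>y. q = Inl (a, y) \<and> r x y)"
  by (cases q) auto

lemma ball_bex_lift_rel_iff:
  "(\<forall>p\<in>A. \<exists>q\<in>B. lift_rel r p q) \<longleftrightarrow>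
     (\<forall>v. Inr v \<in> A \<longrightarrow> Inr v \<in> B) \<and> (\<forall>a x. Inl (a, x) \<in> A \<longrightarrow> (\<exists>y. Inl (a, y) \<in> B \<and> r x y))"
  (is "?lhs \<longleftrightarrow> ?rhs")
proof
  assume ?lhs then show ?rhs by (fastforce simp: lift_rel_Inl_iff)
next
  assume ?rhs
  show ?lhs
  proof
    fix p assume "p \<in> A"
    with \<open>?rhs\<close> show "\<exists>q\<in>B. lift_rel r p q" by (cases p) (fastforce simp: lift_rel_Inl_iff)+
  qed
qed

lemma strat_bisim_Suc_iff_rel_set:
  "strat_bisim \<beta> (Suc k) x y \<longleftrightarrow> rel_set (lift_rel (strat_bisim \<beta> k)) (\<beta> x) (\<beta> y)"
proof -
  have "(\<forall>q\<in>\<beta> y. \<exists>p\<in>\<beta> x. lift_rel (strat_bisim \<beta> k) p q) \<longleftrightarrow>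
      (\<forall>q\<in>\<beta> y. \<exists>p\<in>\<beta> x. lift_rel (strat_bisim \<beta> k)\<inverse>\<inverse> q p)"
    by (simp add: lift_rel_conversep)
  then show ?thesis
    unfolding rel_set_def ball_bex_lift_rel_iff by (auto simp: Eout_def)
qed

lemma strat_bisim_refl: "strat_bisim \<beta> k x x"
  by (induction k arbitrary: x) auto

declare strat_bisim.simps(2) [simp del]

lemma conversep_strat_bisim: "(strat_bisim \<beta> k)\<inverse>\<inverse> = strat_bisim \<beta> k"
proof (induction k)
  case (Suc k)
  show ?case
  proof (intro ext)
    fix x y
    have "(strat_bisim \<beta> (Suc k))\<inverse>\<inverse> x y \<longleftrightarrow> rel_set (lift_rel ((strat_bisim \<beta> k)\<inverse>\<inverse>)) (\<beta> y) (\<beta> x)"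
      by (simp add: strat_bisim_Suc_iff_rel_set Suc.IH)
    also have "\<dots> \<longleftrightarrow> strat_bisim \<beta> (Suc k) x y"
      by (simp add: lift_rel_conversep strat_bisim_Suc_iff_rel_set)
    finally show "(strat_bisim \<beta> (Suc k))\<inverse>\<inverse> x y = strat_bisim \<beta> (Suc k) x y" .
  qed
qed (simp add: fun_eq_iff)

lemma strat_bisim_sym: "strat_bisim \<beta> k x y \<Longrightarrow> strat_bisim \<beta> k y x"
  by (metis conversep_iff conversep_strat_bisim)

lemma strat_bisim_OO_le: "strat_bisim \<beta> k OO strat_bisim \<beta> k \<le> strat_bisim \<beta> k"
proof (induction k)
  case (Suc k)
  then have "lift_rel (strat_bisim \<beta> k) OO lift_rel (strat_bisim \<beta> k) \<le> lift_rel (strat_bisim \<beta> k)"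
    by (meson lift_rel_OO lift_rel_mono order_trans)
  then have "rel_set (lift_rel (strat_bisim \<beta> k)) OO rel_set (lift_rel (strat_bisim \<beta> k))
      \<le> rel_set (lift_rel (strat_bisim \<beta> k))"
    by (metis rel_set_OO rel_set_mono)
  then show ?case
    by (auto simp: strat_bisim_Suc_iff_rel_set)
qed auto

lemma strat_bisim_trans:
  "strat_bisim \<beta> k x y \<Longrightarrow> strat_bisim \<beta> k y z \<Longrightarrow> strat_bisim \<beta> k x z"
  by (rule predicate2D[OF strat_bisim_OO_le relcomppI])

lemma antimono_strat_bisim: "antimono (strat_bisim \<beta>)"
  unfolding antimono_iff_le_Suc
proof
  show "strat_bisim \<beta> (Suc k) \<le> strat_bisim \<beta> k" for k
  proof (induction k)
    case (Suc k)
    have "lift_rel (strat_bisim \<beta> (Suc k)) \<le> lift_rel (strat_bisim \<beta> k)"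
      using Suc.IH by (rule lift_rel_mono)
    then have "rel_set (lift_rel (strat_bisim \<beta> (Suc k))) \<le> rel_set (lift_rel (strat_bisim \<beta> k))"
      by (rule rel_set_mono)
    then show ?case
      by (auto simp: le_fun_def strat_bisim_Suc_iff_rel_set)
  qed auto
qed

lemma strat_bisim_antimono: "j \<le> k \<Longrightarrow> strat_bisim \<beta> k x y \<Longrightarrow> strat_bisim \<beta> j x y"
  using antimono_strat_bisim by (metis antimonoD predicate2D)

lemma symp_lift_rel_strat_bisim: "symp (lift_rel (strat_bisim \<beta> k))"
  unfolding symp_conv_conversep_eq by (simp add: conversep_strat_bisim flip: lift_rel_conversep)

lemma inf1_le: "finite S \<Longrightarrow> s \<in> S \<Longrightarrow> s \<le> c \<Longrightarrow> inf1 S \<le> c"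
  unfolding inf1_def by (auto simp: cInf_eq_Min intro: order_trans[OF Min_le])

lemma le_inf1: "finite S \<Longrightarrow> c \<le> 1 \<Longrightarrow> (\<And>s. s \<in> S \<Longrightarrow> c \<le> s) \<Longrightarrow> c \<le> inf1 S"
  unfolding inf1_def by (auto simp: cInf_eq_Min)

lemma sup0_le: "finite S \<Longrightarrow> 0 \<le> c \<Longrightarrow> (\<And>s. s \<in> S \<Longrightarrow> s \<le> c) \<Longrightarrow> sup0 S \<le> c"
  unfolding sup0_def by (auto simp: cSup_eq_Max)

lemma le_sup0: "finite S \<Longrightarrow> s \<in> S \<Longrightarrow> c \<le> s \<Longrightarrow> c \<le> sup0 S"
  unfolding sup0_def by (auto simp: cSup_eq_Max intro: order_trans[OF _ Max_ge])

lemma hausdorff_le_if_rel_set: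
  assumes "finite A" "finite B" "symp R" "rel_set R A B" "0 \<le> c"
    and "\<And>p q. R p q \<Longrightarrow> e p q \<le> c"
  shows "hausdorff e A B \<le> c"
proof -
  have one_side: "sup0 ((\<lambda>p. inf1 (e p ` B')) ` A') \<le> c"
    if A': "finite A'" and B': "finite B'" and cover: "\<forall>p\<in>A'. \<exists>q\<in>B'. R p q" for A' B'
  proof (rule sup0_le)
    fix s assume "s \<in> (\<lambda>p. inf1 (e p ` B')) ` A'"
    then obtain p q where "s = inf1 (e p ` B')" "q \<in> B'" "R p q"
      using cover by blast
    then show "s \<le> c" using B' assms(6) by (auto intro: inf1_le)
  qed (use A' assms(5) in auto)
  have "\<forall>p\<in>A. \<exists>q\<in>B. R p q" "\<forall>q\<in>B. \<exists>p\<in>A. R q p"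
    using assms(3,4) unfolding rel_set_def by (meson sympD)+
  then show ?thesis
    unfolding hausdorff_def using one_side assms(1,2) by simp
qed

lemma hausdorff_ge_if_not_rel_set:
  assumes "finite A" "finite B" "symp R" "\<not> rel_set R A B" "c \<le> 1"
    and "\<And>p q. \<not> R p q \<Longrightarrow> c \<le> e p q"
  shows "c \<le> hausdorff e A B"
proof -
  have one_side: "c \<le> sup0 ((\<lambda>p. inf1 (e p ` B')) ` A')"
    if "finite A'" "finite B'" "p \<in> A'" "\<forall>q\<in>B'. \<not> R p q" for A' B' p
  proof (rule le_sup0)
    show "c \<le> inf1 (e p ` B')" using that assms(5,6) by (auto intro: le_inf1)
  qed (use that in auto)
  have "(\<exists>p\<in>A. \<forall>q\<in>B. \<not> R p q) \<or> (\<exists>q\<in>B. \<forall>p\<in>A. \<not> R q p)"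
    using assms(3,4) unfolding rel_set_def by (meson sympD)
  then show ?thesis
    unfolding hausdorff_def using one_side assms(1,2) by (meson max.coboundedI1 max.coboundedI2)
qed

lemma hausdorff_le_one:
  assumes "finite A" "finite B" "\<And>p q. e p q \<le> 1"
  shows "hausdorff e A B \<le> 1"
proof -
  have "inf1 (e p ` C) \<le> 1" if "finite C" for p C
  proof (cases "C = {}")
    case False
    then obtain q where "q \<in> C" by blast
    then show ?thesis using that assms(3) by (auto intro: inf1_le)
  qed (simp add: inf1_def)
  then show ?thesis unfolding hausdorff_def using assms by (auto intro!: sup0_le)
qed

lemma hausdorff_nonneg:
  assumes "finite A" "finite B" "\<And>p q. 0 \<le> e p q"
  shows "0 \<le> hausdorff e A B"
proof (cases "A = {}")
  case False
  then obtain p where "p \<in> A" by blast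
  moreover have "0 \<le> inf1 (e p ` B)" using assms by (auto intro: le_inf1)
  ultimately have "0 \<le> sup0 ((\<lambda>p. inf1 (e p ` B)) ` A)"
    using assms(1) by (auto intro: le_sup0)
  then show ?thesis unfolding hausdorff_def by simp
qed (simp add: hausdorff_def sup0_def)

lemma lift_dist_le:
  "(\<And>x y. r x y \<Longrightarrow> d x y \<le> 2 * c) \<Longrightarrow> 0 \<le> c \<Longrightarrow> lift_rel r p q \<Longrightarrow> lift_dist d p q \<le> c"
  by (induction r p q rule: lift_rel.induct) (fastforce simp: mult.commute)+

lemma lift_dist_ge:
  "(\<And>x y. \<not> r x y \<Longrightarrow> 2 * c \<le> d x y) \<Longrightarrow> c \<le> 1 \<Longrightarrow> \<not> lift_rel r p q \<Longrightarrow> c \<le> lift_dist d p q"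
  by (induction r p q rule: lift_rel.induct) (fastforce simp: mult.commute)+

lemma lift_dist_nonneg: "(\<And>x y. 0 \<le> d x y) \<Longrightarrow> 0 \<le> lift_dist d p q"
  by (induction d p q rule: lift_dist.induct) auto

lemma lift_dist_le_one: "(\<And>x y. d x y \<le> 2) \<Longrightarrow> lift_dist d p q \<le> 1"
  by (induction d p q rule: lift_dist.induct) auto

lemma Phi_le_if_strat_bisim:
  assumes "prechart \<beta>" "strat_bisim \<beta> (Suc k) x y" "0 \<le> c"
    and "\<And>x' y'. strat_bisim \<beta> k x' y' \<Longrightarrow> d x' y' \<le> 2 * c"
  shows "Phi \<beta> d x y \<le> c"
  unfolding Phi_def
proof (rule hausdorff_le_if_rel_set)
  show "rel_set (lift_rel (strat_bisim \<beta> k)) (\<beta> x) (\<beta> y)"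
    using assms(2) by (simp add: strat_bisim_Suc_iff_rel_set)
qed (use assms in \<open>auto simp: prechart_def symp_lift_rel_strat_bisim intro: lift_dist_le\<close>)

lemma Phi_ge_if_not_strat_bisim:
  assumes "prechart \<beta>" "\<not> strat_bisim \<beta> (Suc k) x y" "c \<le> 1"
    and "\<And>x' y'. \<not> strat_bisim \<beta> k x' y' \<Longrightarrow> 2 * c \<le> d x' y'"
  shows "c \<le> Phi \<beta> d x y"
  unfolding Phi_def
proof (rule hausdorff_ge_if_not_rel_set)
  show "\<not> rel_set (lift_rel (strat_bisim \<beta> k)) (\<beta> x) (\<beta> y)"
    using assms(2) by (simp add: strat_bisim_Suc_iff_rel_set)
qed (use assms in \<open>auto simp: prechart_def symp_lift_rel_strat_bisim intro: lift_dist_ge\<close>)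

lemma Phi_le_one: "prechart \<beta> \<Longrightarrow> (\<And>x y. d x y \<le> 2) \<Longrightarrow> Phi \<beta> d x y \<le> 1"
  unfolding Phi_def prechart_def by (intro hausdorff_le_one lift_dist_le_one) auto

lemma Phi_nonneg: "prechart \<beta> \<Longrightarrow> (\<And>x y. 0 \<le> d x y) \<Longrightarrow> 0 \<le> Phi \<beta> d x y"
  unfolding Phi_def prechart_def by (intro hausdorff_nonneg lift_dist_nonneg) auto

lemma fixpoint_Phi_ge_if_not_strat_bisim:
  assumes "prechart \<beta>" "Phi \<beta> d = d"
  shows "\<not> strat_bisim \<beta> k x y \<Longrightarrow> 2 * (1/2) ^ k \<le> d x y"
proof (induction k arbitrary: x y)
  case (Suc k)
  then have "(1/2) ^ k \<le> Phi \<beta> d x y"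
    using assms(1) by (intro Phi_ge_if_not_strat_bisim) (auto simp: power_le_one)
  then show ?case using assms(2) by simp
qed simp

definition bisim_dist :: "('x \<Rightarrow> ('a \<times> 'x + 'v) set) \<Rightarrow> 'x \<Rightarrow> 'x \<Rightarrow> real" where
  "bisim_dist \<beta> x y =
     (if \<forall>k. strat_bisim \<beta> k x y then 0 else (1/2) ^ (LEAST k. \<not> strat_bisim \<beta> (Suc k) x y))"

lemma bisim_dist_eq_power:
  assumes "strat_bisim \<beta> m x y" "\<not> strat_bisim \<beta> (Suc m) x y"
  shows "bisim_dist \<beta> x y = (1/2) ^ m"
proof -
  have "(LEAST k. \<not> strat_bisim \<beta> (Suc k) x y) = m"
  proof (rule Least_equality)
    show "m \<le> k" if "\<not> strat_bisim \<beta> (Suc k) x y" for k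
      using that assms(1) strat_bisim_antimono[of "Suc k" m] by (meson not_less_eq_eq)
  qed (rule assms(2))
  then show ?thesis using assms(2) by (auto simp: bisim_dist_def)
qed

lemma bisim_dist_cases:
  obtains "\<forall>k. strat_bisim \<beta> k x y" "bisim_dist \<beta> x y = 0"
  | m where "strat_bisim \<beta> m x y" "\<not> strat_bisim \<beta> (Suc m) x y" "bisim_dist \<beta> x y = (1/2) ^ m"
proof (cases "\<forall>k. strat_bisim \<beta> k x y")
  case False
  have "\<exists>m. \<not> \<not> strat_bisim \<beta> m x y \<and> \<not> strat_bisim \<beta> (Suc m) x y"
    by (rule exists_least_lemma) (use False in auto)
  then obtain m where m: "strat_bisim \<beta> m x y" "\<not> strat_bisim \<beta> (Suc m) x y"
    by blast
  show ?thesis by (rule that(2)[OF m bisim_dist_eq_power[OF m]])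
qed (simp add: bisim_dist_def that(1))

lemma strat_bisim_iff_bisim_dist_le: "strat_bisim \<beta> k x y \<longleftrightarrow> bisim_dist \<beta> x y \<le> (1/2) ^ k"
proof (cases \<beta> x y rule: bisim_dist_cases)
  case (2 m)
  have "strat_bisim \<beta> k x y \<longleftrightarrow> k \<le> m"
    using 2 strat_bisim_antimono[of k m] strat_bisim_antimono[of "Suc m" k] by (meson not_less_eq_eq)
  then show ?thesis using 2 by (simp add: power_decreasing_iff)
qed simp

lemma bisim_dist_ge: "\<not> strat_bisim \<beta> k x y \<Longrightarrow> 2 * (1/2) ^ k \<le> bisim_dist \<beta> x y"
proof (cases \<beta> x y rule: bisim_dist_cases)
  case (2 m)
  assume "\<not> strat_bisim \<beta> k x y"
  then obtain j where "k = Suc j" "m \<le> j"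
    using 2 strat_bisim_antimono[of k m] by (metis Suc_le_D nat_le_linear not_less_eq_eq)
  then show ?thesis using 2 by (simp add: power_decreasing)
qed simp

lemma bisim_dist_nonneg: "0 \<le> bisim_dist \<beta> x y"
  by (cases \<beta> x y rule: bisim_dist_cases) auto

lemma bisim_dist_le_one: "bisim_dist \<beta> x y \<le> 1"
  using strat_bisim_iff_bisim_dist_le[of \<beta> 0] by simp

lemma bisim_dist_self: "bisim_dist \<beta> x x = 0"
  by (simp add: bisim_dist_def strat_bisim_refl)

lemma bisim_dist_commute: "bisim_dist \<beta> x y = bisim_dist \<beta> y x"
proof (cases \<beta> x y rule: bisim_dist_cases)
  case 1
  then have "\<forall>k. strat_bisim \<beta> k y x" by (meson strat_bisim_sym)
  then show ?thesis using 1 by (simp add: bisim_dist_def)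
next
  case (2 m)
  then have "strat_bisim \<beta> m y x" "\<not> strat_bisim \<beta> (Suc m) y x" by (meson strat_bisim_sym)+
  then show ?thesis using 2 by (simp add: bisim_dist_eq_power)
qed

lemma bisim_dist_triangle: "bisim_dist \<beta> x z \<le> bisim_dist \<beta> x y + bisim_dist \<beta> y z"
proof (cases \<beta> x z rule: bisim_dist_cases)
  case (2 m)
  then have "\<not> strat_bisim \<beta> (Suc m) x y \<or> \<not> strat_bisim \<beta> (Suc m) y z"
    by (meson strat_bisim_trans)
  then show ?thesis
    using 2 bisim_dist_ge[of \<beta> "Suc m"] bisim_dist_nonneg[of \<beta>] by (auto intro: add_increasing add_increasing2)
qed (simp add: add_nonneg_nonneg bisim_dist_nonneg)

lemma bisim_dist_pseudometric: "bisim_dist \<beta> \<in> pseudometrics"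
  unfolding pseudometrics_def
  by (intro CollectI conjI allI bisim_dist_nonneg bisim_dist_le_one bisim_dist_self
      bisim_dist_commute bisim_dist_triangle)

lemma Phi_bisim_dist:
  assumes "prechart \<beta>"
  shows "Phi \<beta> (bisim_dist \<beta>) = bisim_dist \<beta>"
proof (intro ext)
  fix x y
  have upper: "Phi \<beta> (bisim_dist \<beta>) x y \<le> (1/2) ^ k" if "strat_bisim \<beta> k x y" for k
  proof (cases k)
    case 0
    have "bisim_dist \<beta> x' y' \<le> 2" for x' y'
      using bisim_dist_le_one[of \<beta> x' y'] by linarith
    then show ?thesis using assms 0 by (simp add: Phi_le_one)
  next
    case (Suc j)
    then show ?thesis
      using assms that by (intro Phi_le_if_strat_bisim) (auto simp: strat_bisim_iff_bisim_dist_le)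
  qed
  show "Phi \<beta> (bisim_dist \<beta>) x y = bisim_dist \<beta> x y"
  proof (cases \<beta> x y rule: bisim_dist_cases)
    case 1
    have "Phi \<beta> (bisim_dist \<beta>) x y \<le> 0"
    proof (rule ccontr)
      assume "\<not> Phi \<beta> (bisim_dist \<beta>) x y \<le> 0"
      then obtain k where "(1/2) ^ k < Phi \<beta> (bisim_dist \<beta>) x y"
        using real_arch_pow_inv[of _ "1/2"] by force
      then show False using upper 1(1) by (meson not_le)
    qed
    moreover have "0 \<le> Phi \<beta> (bisim_dist \<beta>) x y"
      using assms by (rule Phi_nonneg) (rule bisim_dist_nonneg)
    ultimately show ?thesis using 1(2) by linarith
  next
    case (2 m)
    have "(1/2) ^ m \<le> Phi \<beta> (bisim_dist \<beta>) x y"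
      using assms 2(2) bisim_dist_ge by (intro Phi_ge_if_not_strat_bisim) (auto simp: power_le_one)
    then show ?thesis using upper 2 by (simp add: antisym)
  qed
qed

lemma bisim_dist_le_fixpoint:
  assumes "prechart \<beta>" "\<And>x y. 0 \<le> d x y" "Phi \<beta> d = d"
  shows "bisim_dist \<beta> \<le> d"
proof (intro le_funI)
  fix x y
  show "bisim_dist \<beta> x y \<le> d x y"
  proof (cases \<beta> x y rule: bisim_dist_cases)
    case (2 m)
    then show ?thesis using fixpoint_Phi_ge_if_not_strat_bisim[OF assms(1,3), of "Suc m"] by simp
  qed (simp add: assms(2))
qed

lemma bd_eq_bisim_dist:
  assumes "prechart \<beta>"
  shows "bd \<beta> = bisim_dist \<beta>"
  unfolding bd_def
proof (rule the_equality)
  have "\<forall>d\<in>pseudometrics. Phi \<beta> d = d \<longrightarrow> bisim_dist \<beta> \<le> d"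
    using bisim_dist_le_fixpoint[OF assms] by (auto simp: pseudometrics_def)
  then show "bisim_dist \<beta> \<in> pseudometrics \<and> Phi \<beta> (bisim_dist \<beta>) = bisim_dist \<beta>
      \<and> (\<forall>d\<in>pseudometrics. Phi \<beta> d = d \<longrightarrow> bisim_dist \<beta> \<le> d)"
    using bisim_dist_pseudometric[of \<beta>] Phi_bisim_dist[OF assms] by blast
next
  fix d
  assume d: "d \<in> pseudometrics \<and> Phi \<beta> d = d \<and> (\<forall>d'\<in>pseudometrics. Phi \<beta> d' = d' \<longrightarrow> d \<le> d')"
  then have "d \<le> bisim_dist \<beta>"
    using bisim_dist_pseudometric[of \<beta>] Phi_bisim_dist[OF assms] by blast
  moreover have "bisim_dist \<beta> \<le> d"
    using d bisim_dist_le_fixpoint[OF assms] by (auto simp: pseudometrics_def)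
  ultimately show "d = bisim_dist \<beta>" by (rule antisym)
qed

theorem mainTheorem3:
  fixes \<beta> :: "'x \<Rightarrow> ('a \<times> 'x + 'v) set"
  assumes "prechart \<beta>"
  shows "\<forall>x y (k::nat). strat_bisim \<beta> k x y \<longleftrightarrow> bd \<beta> x y \<le> (1/2) ^ k"
  unfolding bd_eq_bisim_dist[OF assms] by (intro allI) (rule strat_bisim_iff_bisim_dist_le)

end
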